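(* Let $\mathcal C\subseteq V$ be a subspace of dimension $K=|\mathcal C|$ with orthogonal projector $P$. Then: (1) $A_i(P,P)\ge0$ for all $i$; (2) $\sum_iA_i(P,P)=K$; (3) $\sum_iB_i(P,P)=K^2$; (4) if some sector $\mathcal E_0=\mathrm{span}\{I\}$, then $A_0(P,P)=K^2/\dim V$ and $B_0(P,P)=K/\dim V$; (5) for every $i$, $A_i(P,P)\le K\,B_i(P,P)$, with equality if and only if $\mathcal C$ detects every error in $\mathcal E_i$.
   Context: Let $V$ be a finite-dimensional complex Hilbert space and $\mathcal L(V)$ the space of linear operators on $V$, equipped with the Hilbert–Schmidt inner product $\langle X_1,X_2\rangle=\mathrm{Tr}(X_1^\dagger X_2)$. Fix an orthogonal decomposition $\mathcal L(V)=\bigoplus_{i\in I}\mathcal E_i$. For each $i$, let $\Pi_i$ be the orthogonal projector of $\mathcal L(V)$ onto $\mathcal E_i$, fix an orthonormal basis $\mathcal B_i$ of $\mathcal E_i$, and let $\mathrm{Twirl}_i(X)=\sum_{E\in\mathcal B_i}E^\dagger XE$. Define $A_i(X_1,X_2)=\langle X_1,\Pi_i(X_2)\rangle$ and $B_i(X_1,X_2)=\langle X_1,\mathrm{Twirl}_i(X_2)\rangle$. A subspace $\mathcal C\subseteq V$ with orthogonal projector $P$ detects every error in a subspace $\mathcal F\subseteq\mathcal L(V)$ if for every $E\in\mathcal F$ there is a scalar $c_E\in\mathbb C$ with $PEP=c_EP$. *)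

theory Defs
  imports "HOL-Analysis.Analysis" "HOL-Library.Complex_Order"
begin

text \<open>V = complex^'n (dim V = CARD('n)); L(V) = complex^'n^'n (matrices).\<close>

definition mscale :: "complex \<Rightarrow> complex^'n^'n \<Rightarrow> complex^'n^'n" where
  "mscale c A = (\<chi> i j. c * A$i$j)"

definition adj :: "complex^'n^'n \<Rightarrow> complex^'n^'n" where
  "adj A = (\<chi> i j. cnj (A$j$i))"

definition hs :: "complex^'n^'n \<Rightarrow> complex^'n^'n \<Rightarrow> complex" where
  "hs X Y = trace (adj X ** Y)"

definition msubspace :: "(complex^'n^'n) set \<Rightarrow> bool" where
  "msubspace S \<longleftrightarrow> 0 \<in> S \<and> (\<forall>x\<in>S. \<forall>y\<in>S. x + y \<in> S) \<and> (\<forall>c. \<forall>x\<in>S. mscale c x \<in> S)"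

definition mspan :: "(complex^'n^'n) set \<Rightarrow> (complex^'n^'n) set" where
  "mspan Bs = {(\<Sum>E\<in>Bs. mscale (f E) E) | f. True}"

definition orthonormal_basis :: "(complex^'n^'n) set \<Rightarrow> (complex^'n^'n) set \<Rightarrow> bool" where
  "orthonormal_basis Bs S \<longleftrightarrow> finite Bs \<and> Bs \<subseteq> S \<and> S \<subseteq> mspan Bs \<and>
     (\<forall>E\<in>Bs. \<forall>F\<in>Bs. hs E F = (if E = F then 1 else 0))"

definition orth_decomp :: "'i set \<Rightarrow> ('i \<Rightarrow> (complex^'n^'n) set) \<Rightarrow> bool" where
  "orth_decomp I E \<longleftrightarrow> (\<forall>i\<in>I. msubspace (E i)) \<and>
     (\<forall>i\<in>I. \<forall>j\<in>I. i \<noteq> j \<longrightarrow> (\<forall>X\<in>E i. \<forall>Y\<in>E j. hs X Y = 0)) \<and>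
     (\<forall>X. \<exists>Y. (\<forall>i\<in>I. Y i \<in> E i) \<and> X = (\<Sum>i\<in>I. Y i))"

definition orth_proj :: "(complex^'n^'n) set \<Rightarrow> complex^'n^'n \<Rightarrow> complex^'n^'n" where
  "orth_proj S X = (THE Y. Y \<in> S \<and> (\<forall>Z\<in>S. hs Z (X - Y) = 0))"

definition twirl :: "(complex^'n^'n) set \<Rightarrow> complex^'n^'n \<Rightarrow> complex^'n^'n" where
  "twirl Bs X = (\<Sum>E\<in>Bs. adj E ** X ** E)"

definition Aform :: "(complex^'n^'n) set \<Rightarrow> complex^'n^'n \<Rightarrow> complex^'n^'n \<Rightarrow> complex" where
  "Aform S X1 X2 = hs X1 (orth_proj S X2)"

definition Bform :: "(complex^'n^'n) set \<Rightarrow> complex^'n^'n \<Rightarrow> complex^'n^'n \<Rightarrow> complex" where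
  "Bform Bs X1 X2 = hs X1 (twirl Bs X2)"

definition is_orth_projector :: "complex^'n^'n \<Rightarrow> (complex^'n) set \<Rightarrow> bool" where
  "is_orth_projector P C \<longleftrightarrow> adj P = P \<and> P ** P = P \<and> range (\<lambda>v. P *v v) = C"

definition detects :: "complex^'n^'n \<Rightarrow> (complex^'n^'n) set \<Rightarrow> bool" where
  "detects P F \<longleftrightarrow> (\<forall>E\<in>F. \<exists>c. P ** E ** P = mscale c P)"

end

theory Submission
  imports Defs
begin

text \<open>
  For a self-adjoint idempotent P and an operator B, cyclicity of the trace gives
  \<open>\<langle>B, P\<rangle> = \<langle>PBP, P\<rangle>\<close> and \<open>\<langle>P, B\<^sup>\<dagger>PB\<rangle> = \<parallel>PBP\<parallel>\<^sup>2\<close>. Summing over an orthonormal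
  basis of a sector \<open>\<E>\<^sub>i\<close> therefore gives \<open>A\<^sub>i(P,P) = \<Sum> |\<langle>PBP, P\<rangle>|\<^sup>2\<close> and
  \<open>B\<^sub>i(P,P) = \<Sum> \<parallel>PBP\<parallel>\<^sup>2\<close>, and Cauchy-Schwarz with \<open>\<parallel>P\<parallel>\<^sup>2 = tr P = K\<close> yields
  \<open>A\<^sub>i \<le> K B\<^sub>i\<close> termwise, with equality exactly when every PBP is a multiple of P.
  The two sum rules come from completeness of the decomposition: the projectors onto
  the sectors add up to the identity, and the union of the bases is an orthonormal
  basis of the operator space, so \<open>\<Sum>\<^sub>B B\<^sup>\<dagger>XB = tr(X) I\<close>.
\<close>

lemma sum_mono_eq_iff:
  fixes f g :: "'a \<Rightarrow> 'b::ordered_cancel_comm_monoid_add"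
  assumes "finite A" and "\<And>x. x \<in> A \<Longrightarrow> f x \<le> g x"
  shows "sum f A = sum g A \<longleftrightarrow> (\<forall>x\<in>A. f x = g x)"
proof
  show "\<forall>x\<in>A. f x = g x" if "sum f A = sum g A"
    using sum_mono_inv[OF that assms(2) _ assms(1)] by blast
qed (rule sum.cong[OF refl], blast)

section \<open>The Hilbert-Schmidt inner product\<close>

lemma mscale_nth [simp]: "mscale c A $ i $ j = c * A $ i $ j"
  by (simp add: mscale_def)

lemma adj_nth [simp]: "adj A $ i $ j = cnj (A $ j $ i)"
  by (simp add: adj_def)

lemma matrix_mult_nth: "(A ** B) $ i $ j = (\<Sum>k\<in>UNIV. A $ i $ k * B $ k $ j)"
  by (simp add: matrix_matrix_mult_def)

lemma mscale_one [simp]: "mscale 1 X = X"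
  by (simp add: vec_eq_iff)

lemma mscale_mscale [simp]: "mscale c (mscale d X) = mscale (c * d) X"
  by (simp add: vec_eq_iff)

lemma sum_mscale: "(\<Sum>s\<in>S. mscale (f s) X) = mscale (sum f S) X"
  by (induction S rule: infinite_finite_induct) (auto simp: vec_eq_iff algebra_simps)

lemma matrix_mult_mscale_left: "mscale c X ** Y = mscale c (X ** Y)"
  by (simp add: vec_eq_iff matrix_mult_nth sum_distrib_left algebra_simps)

lemma matrix_mult_mscale_right: "X ** mscale c Y = mscale c (X ** Y)"
  by (simp add: vec_eq_iff matrix_mult_nth sum_distrib_left algebra_simps)

lemma matrix_add_rdistrib: "(A + B) ** (C :: complex^'n^'n) = A ** C + B ** C"
  by (simp add: vec_eq_iff matrix_mult_nth distrib_right sum.distrib)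

lemma matrix_mult_sum_left: "sum f S ** (Y :: complex^'n^'n) = (\<Sum>s\<in>S. f s ** Y)"
  by (induction S rule: infinite_finite_induct) (auto simp: matrix_add_rdistrib)

lemma matrix_mult_sum_right: "Y ** sum f S = (\<Sum>s\<in>S. Y ** f s)"
  by (induction S rule: infinite_finite_induct) (auto simp: matrix_add_ldistrib)

lemma adj_mscale: "adj (mscale c X) = mscale (cnj c) (adj X)"
  by (simp add: vec_eq_iff)

lemma adj_mat_1 [simp]: "adj (mat 1) = (mat 1 :: complex^'n^'n)"
  by (simp add: vec_eq_iff mat_def)

lemma adj_matrix_mult: "adj (X ** Y) = adj Y ** adj X"
  by (simp add: vec_eq_iff matrix_mult_nth mult.commute)

lemma hs_eq_sum_entries: "hs X Y = (\<Sum>i\<in>UNIV. \<Sum>j\<in>UNIV. cnj (X $ i $ j) * Y $ i $ j)"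
  unfolding hs_def trace_def by (simp add: matrix_mult_nth) (rule sum.swap)

lemma hs_cnj_swap: "hs Y X = cnj (hs X Y)"
  by (simp add: hs_eq_sum_entries mult.commute)

lemma hs_zero_right [simp]: "hs X 0 = 0"
  by (simp add: hs_eq_sum_entries)

lemma hs_add_right: "hs X (Y + Z) = hs X Y + hs X Z"
  by (simp add: hs_eq_sum_entries algebra_simps sum.distrib)

lemma hs_diff_right: "hs X (Y - Z) = hs X Y - hs X Z"
  by (simp add: hs_eq_sum_entries algebra_simps sum_subtractf)

lemma hs_diff_left: "hs (Y - Z) X = hs Y X - hs Z X"
  by (simp add: hs_eq_sum_entries algebra_simps sum_subtractf)

lemma hs_scale_right: "hs X (mscale c Y) = c * hs X Y"
  by (simp add: hs_eq_sum_entries sum_distrib_left algebra_simps)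

lemma hs_scale_left: "hs (mscale c Y) X = cnj c * hs Y X"
  by (simp add: hs_eq_sum_entries sum_distrib_left algebra_simps)

lemma hs_sum_right: "hs X (sum f S) = (\<Sum>s\<in>S. hs X (f s))"
  by (induction S rule: infinite_finite_induct) (auto simp: hs_add_right)

lemma hs_sum_left: "hs (sum f S) X = (\<Sum>s\<in>S. hs (f s) X)"
  by (subst (1 2) hs_cnj_swap) (simp add: hs_sum_right)

lemma hs_mat_1_left: "hs (mat 1) X = trace X"
  by (simp add: hs_def)

definition hs_norm2 :: "complex^'n^'n \<Rightarrow> real" where
  "hs_norm2 X = (\<Sum>i\<in>UNIV. \<Sum>j\<in>UNIV. (cmod (X $ i $ j))\<^sup>2)"

lemma hs_self_eq_norm2: "hs X X = complex_of_real (hs_norm2 X)"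
proof -
  have "cnj z * z = (complex_of_real (cmod z))\<^sup>2" for z
    using complex_norm_square[of z] by (simp add: mult.commute)
  then show ?thesis by (simp add: hs_eq_sum_entries hs_norm2_def)
qed

lemma hs_norm2_nonneg: "0 \<le> hs_norm2 X"
  by (simp add: hs_norm2_def sum_nonneg)

lemma hs_norm2_eq_0_iff: "hs_norm2 X = 0 \<longleftrightarrow> X = 0"
proof
  assume "hs_norm2 X = 0"
  then have "\<forall>i. (\<Sum>j\<in>UNIV. (cmod (X $ i $ j))\<^sup>2) = 0"
    unfolding hs_norm2_def by (subst (asm) sum_nonneg_eq_0_iff) (auto intro: sum_nonneg)
  then show "X = 0" by (simp add: vec_eq_iff sum_nonneg_eq_0_iff)
qed (simp add: hs_norm2_def)

lemma hs_norm2_pos: "X \<noteq> 0 \<Longrightarrow> 0 < hs_norm2 X"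
  using hs_norm2_nonneg[of X] hs_norm2_eq_0_iff[of X] by linarith

lemma hs_norm2_mscale: "hs_norm2 (mscale c X) = (cmod c)\<^sup>2 * hs_norm2 X"
  by (simp add: hs_norm2_def norm_mult power_mult_distrib sum_distrib_left)

lemma hs_norm2_diff_projection:
  fixes M P :: "complex^'n^'n"
  assumes "P \<noteq> 0"
  defines "t \<equiv> hs P M / complex_of_real (hs_norm2 P)"
  shows "hs_norm2 (M - mscale t P) = hs_norm2 M - (cmod (hs M P))\<^sup>2 / hs_norm2 P"
proof -
  define u where "u = hs P M"
  define p where "p = complex_of_real (hs_norm2 P)"
  have "p \<noteq> 0" using hs_norm2_pos[OF assms(1)] by (simp add: p_def)
  have "complex_of_real (hs_norm2 (M - mscale t P))
      = hs M M - t * cnj u - cnj t * u + cnj t * t * p"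
    by (simp add: hs_self_eq_norm2[symmetric] hs_diff_left hs_diff_right hs_scale_left
        hs_scale_right hs_cnj_swap[of M P] u_def p_def algebra_simps)
  also have "\<dots> = hs M M - u * cnj u / p"
    using \<open>p \<noteq> 0\<close> by (simp add: t_def u_def p_def field_simps)
  also have "\<dots> = complex_of_real (hs_norm2 M - (cmod (hs M P))\<^sup>2 / hs_norm2 P)"
    by (simp add: hs_self_eq_norm2 u_def p_def hs_cnj_swap[of M P]
        complex_norm_square del: of_real_power)
  finally show ?thesis by (simp only: of_real_eq_iff)
qed

lemma hs_cauchy_schwarz: "(cmod (hs M P))\<^sup>2 \<le> hs_norm2 P * hs_norm2 M"
proof (cases "P = 0")
  case False
  have "0 \<le> hs_norm2 M - (cmod (hs M P))\<^sup>2 / hs_norm2 P"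
    unfolding hs_norm2_diff_projection[OF False, symmetric] by (rule hs_norm2_nonneg)
  with hs_norm2_pos[OF False] show ?thesis by (simp add: field_simps)
qed (simp add: hs_norm2_def)

lemma hs_cauchy_schwarz_eq_iff:
  assumes "P \<noteq> 0"
  shows "(cmod (hs M P))\<^sup>2 = hs_norm2 P * hs_norm2 M \<longleftrightarrow> (\<exists>c. M = mscale c P)"
proof
  assume "(cmod (hs M P))\<^sup>2 = hs_norm2 P * hs_norm2 M"
  with hs_norm2_pos[OF assms] have "hs_norm2 M - (cmod (hs M P))\<^sup>2 / hs_norm2 P = 0"
    by simp
  then have "M - mscale (hs P M / complex_of_real (hs_norm2 P)) P = 0"
    unfolding hs_norm2_diff_projection[OF assms, symmetric] hs_norm2_eq_0_iff .
  then show "\<exists>c. M = mscale c P" by auto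
next
  assume "\<exists>c. M = mscale c P"
  then obtain c where "M = mscale c P" ..
  then show "(cmod (hs M P))\<^sup>2 = hs_norm2 P * hs_norm2 M"
    by (simp add: hs_scale_left hs_self_eq_norm2 hs_norm2_mscale norm_mult hs_norm2_nonneg
        power_mult_distrib power2_eq_square)
qed

section \<open>Orthonormal bases and orthogonal projections\<close>

lemma orthonormal_basisD:
  assumes "orthonormal_basis Bs S"
  shows "finite Bs" "Bs \<subseteq> S" "S \<subseteq> mspan Bs"
    "\<And>E F. E \<in> Bs \<Longrightarrow> F \<in> Bs \<Longrightarrow> hs E F = (if E = F then 1 else 0)"
  using assms unfolding orthonormal_basis_def by auto

lemma hs_orthonormal_basis_combination:
  assumes "orthonormal_basis Bs S" and "B \<in> Bs"
  shows "hs B (\<Sum>E\<in>Bs. mscale (f E) E) = f B"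
proof -
  have "hs B (\<Sum>E\<in>Bs. mscale (f E) E) = (\<Sum>E\<in>Bs. if B = E then f E else 0)"
    unfolding hs_sum_right hs_scale_right
    using orthonormal_basisD(4)[OF assms(1) assms(2)] by (intro sum.cong) auto
  then show ?thesis using orthonormal_basisD(1)[OF assms(1)] assms(2) by simp
qed

lemma orthonormal_basis_expansion:
  assumes "orthonormal_basis Bs S" and "X \<in> S"
  shows "X = (\<Sum>B\<in>Bs. mscale (hs B X) B)"
proof -
  obtain f where X: "X = (\<Sum>E\<in>Bs. mscale (f E) E)"
    using assms orthonormal_basisD(3)[OF assms(1)] unfolding mspan_def by auto
  have "hs B X = f B" if "B \<in> Bs" for B
    unfolding X by (rule hs_orthonormal_basis_combination[OF assms(1) that])
  then show ?thesis by (subst (1) X) (intro sum.cong, auto)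
qed

lemma msubspace_sum:
  assumes "msubspace S" and "\<And>x. x \<in> A \<Longrightarrow> f x \<in> S"
  shows "sum f A \<in> S"
  using assms(2)
  by (induction A rule: infinite_finite_induct) (use assms(1) in \<open>auto simp: msubspace_def\<close>)

lemma orthonormal_basis_residual_orthogonal:
  fixes X :: "complex^'n^'n"
  assumes "orthonormal_basis Bs S"
  defines "Y \<equiv> \<Sum>B\<in>Bs. mscale (hs B X) B"
  shows "\<forall>Z\<in>S. hs Z (X - Y) = 0"
proof
  fix Z assume "Z \<in> S"
  have "hs B (X - Y) = 0" if "B \<in> Bs" for B
    using that unfolding Y_def
    by (simp add: hs_diff_right hs_orthonormal_basis_combination[OF assms(1)])
  then have "hs (\<Sum>B\<in>Bs. mscale (hs B Z) B) (X - Y) = 0"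
    by (simp add: hs_sum_left hs_scale_left)
  then show "hs Z (X - Y) = 0"
    using orthonormal_basis_expansion[OF assms(1) \<open>Z \<in> S\<close>] by metis
qed

lemma orthonormal_basis_residual_unique:
  assumes "orthonormal_basis Bs S" and "Y \<in> S" and "\<forall>Z\<in>S. hs Z (X - Y) = 0"
  shows "Y = (\<Sum>B\<in>Bs. mscale (hs B X) B)"
proof -
  have "hs B Y = hs B X" if "B \<in> Bs" for B
    using assms(3) orthonormal_basisD(2)[OF assms(1)] that by (auto simp: hs_diff_right)
  then have "(\<Sum>B\<in>Bs. mscale (hs B Y) B) = (\<Sum>B\<in>Bs. mscale (hs B X) B)"
    by (intro sum.cong) auto
  then show ?thesis
    using orthonormal_basis_expansion[OF assms(1,2)] by metis
qed

lemma orth_proj_eq_expansion: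
  assumes "msubspace S" and "orthonormal_basis Bs S"
  shows "orth_proj S X = (\<Sum>B\<in>Bs. mscale (hs B X) B)"
  unfolding orth_proj_def
proof (rule the_equality)
  have "(\<Sum>B\<in>Bs. mscale (hs B X) B) \<in> S"
    using assms orthonormal_basisD(2)[OF assms(2)]
    by (intro msubspace_sum) (auto simp: msubspace_def)
  then show "(\<Sum>B\<in>Bs. mscale (hs B X) B) \<in> S \<and>
      (\<forall>Z\<in>S. hs Z (X - (\<Sum>B\<in>Bs. mscale (hs B X) B)) = 0)"
    using orthonormal_basis_residual_orthogonal[OF assms(2)] by blast
next
  show "Y = (\<Sum>B\<in>Bs. mscale (hs B X) B)" if "Y \<in> S \<and> (\<forall>Z\<in>S. hs Z (X - Y) = 0)" for Y
    using orthonormal_basis_residual_unique[OF assms(2)] that by blast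
qed

lemma Aform_eq_sum:
  assumes "msubspace S" and "orthonormal_basis Bs S"
  shows "Aform S X Y = (\<Sum>B\<in>Bs. hs B Y * hs X B)"
  by (simp add: Aform_def orth_proj_eq_expansion[OF assms] hs_sum_right hs_scale_right)

lemma Aform_self_eq:
  assumes "msubspace S" and "orthonormal_basis Bs S"
  shows "Aform S X X = complex_of_real (\<Sum>B\<in>Bs. (cmod (hs B X))\<^sup>2)"
  by (simp add: Aform_eq_sum[OF assms] hs_cnj_swap[of X] complex_norm_square del: of_real_power)

lemma Aform_self_nonneg:
  assumes "msubspace S" and "orthonormal_basis Bs S"
  shows "0 \<le> Aform S X X"
  by (simp add: Aform_self_eq[OF assms] less_eq_complex_def sum_nonneg)

lemma detects_iff_orthonormal_basis:
  assumes "orthonormal_basis Bs S"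
  shows "detects P S \<longleftrightarrow> (\<forall>B\<in>Bs. \<exists>c. P ** B ** P = mscale c P)"
proof
  assume "detects P S"
  then show "\<forall>B\<in>Bs. \<exists>c. P ** B ** P = mscale c P"
    using orthonormal_basisD(2)[OF assms] unfolding detects_def by blast
next
  assume "\<forall>B\<in>Bs. \<exists>c. P ** B ** P = mscale c P"
  then obtain f where f: "\<And>B. B \<in> Bs \<Longrightarrow> P ** B ** P = mscale (f B) P" by metis
  have combination: "P ** (\<Sum>B\<in>Bs. mscale (c B) B) ** P = mscale (\<Sum>B\<in>Bs. c B * f B) P"
    for c
  proof -
    have "P ** (\<Sum>B\<in>Bs. mscale (c B) B) ** P = (\<Sum>B\<in>Bs. mscale (c B) (P ** B ** P))"
      by (simp add: matrix_mult_sum_left matrix_mult_sum_right matrix_mult_mscale_left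
          matrix_mult_mscale_right)
    also have "\<dots> = (\<Sum>B\<in>Bs. mscale (c B * f B) P)"
      using f by (intro sum.cong) auto
    finally show ?thesis by (simp only: sum_mscale)
  qed
  have "P ** Z ** P = mscale (\<Sum>B\<in>Bs. hs B Z * f B) P" if "Z \<in> S" for Z
  proof -
    from orthonormal_basis_expansion[OF assms that]
    have "P ** Z ** P = P ** (\<Sum>B\<in>Bs. mscale (hs B Z) B) ** P"
      by (rule arg_cong[where f = "\<lambda>M. P ** M ** P"])
    also have "\<dots> = mscale (\<Sum>B\<in>Bs. hs B Z * f B) P"
      by (rule combination)
    finally show ?thesis .
  qed
  then show "detects P S" unfolding detects_def by (intro ballI exI)
qed

section \<open>Orthogonal decompositions of the operator space\<close>

lemma orth_decomp_msubspace: "orth_decomp I E \<Longrightarrow> i \<in> I \<Longrightarrow> msubspace (E i)"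
  by (simp add: orth_decomp_def)

lemma orth_decomp_orthogonal:
  assumes "orth_decomp I E" and "i \<in> I" and "j \<in> I" and "i \<noteq> j" and "X \<in> E i" and "Y \<in> E j"
  shows "hs X Y = 0"
proof -
  have "\<forall>i\<in>I. \<forall>j\<in>I. i \<noteq> j \<longrightarrow> (\<forall>X\<in>E i. \<forall>Y\<in>E j. hs X Y = 0)"
    using assms(1) by (simp add: orth_decomp_def)
  with assms(2-) show ?thesis by blast
qed

lemma orth_decompE:
  fixes X :: "complex^'n^'n"
  assumes "orth_decomp I E"
  obtains Y where "\<And>i. i \<in> I \<Longrightarrow> Y i \<in> E i" and "X = (\<Sum>i\<in>I. Y i)"
proof -
  have "\<exists>Y. (\<forall>i\<in>I. Y i \<in> E i) \<and> X = (\<Sum>i\<in>I. Y i)"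
    using assms by (simp add: orth_decomp_def)
  with that show ?thesis by blast
qed

lemma hs_orth_decomp_sum:
  assumes "finite I" and "orth_decomp I E" and Y: "\<And>j. j \<in> I \<Longrightarrow> Y j \<in> E j"
    and "i \<in> I" and "B \<in> E i"
  shows "hs B (\<Sum>j\<in>I. Y j) = hs B (Y i)"
proof -
  have "hs B (\<Sum>j\<in>I. Y j) = hs B (Y i) + (\<Sum>j\<in>I - {i}. hs B (Y j))"
    unfolding hs_sum_right by (rule sum.remove[OF assms(1,4)])
  also have "(\<Sum>j\<in>I - {i}. hs B (Y j)) = 0"
  proof (rule sum.neutral, rule ballI)
    fix j assume "j \<in> I - {i}"
    then show "hs B (Y j) = 0"
      using orth_decomp_orthogonal[OF assms(2,4) _ _ assms(5) Y[of j]] by auto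
  qed
  finally show ?thesis by simp
qed

lemma orth_decomp_expansion:
  assumes "finite I" and "orth_decomp I E"
    and onb: "\<And>i. i \<in> I \<Longrightarrow> orthonormal_basis (Bs i) (E i)"
  shows "X = (\<Sum>i\<in>I. \<Sum>B\<in>Bs i. mscale (hs B X) B)"
proof -
  obtain Y where Y: "\<And>i. i \<in> I \<Longrightarrow> Y i \<in> E i" and X: "X = (\<Sum>i\<in>I. Y i)"
    using orth_decompE[OF assms(2), where X = X] by blast
  have "Y i = (\<Sum>B\<in>Bs i. mscale (hs B X) B)" if "i \<in> I" for i
  proof -
    have "Y i = (\<Sum>B\<in>Bs i. mscale (hs B (Y i)) B)"
      by (rule orthonormal_basis_expansion[OF onb[OF that] Y[OF that]])
    also have "\<dots> = (\<Sum>B\<in>Bs i. mscale (hs B X) B)"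
      unfolding X using hs_orth_decomp_sum[OF assms(1,2) Y that] orthonormal_basisD(2)[OF onb[OF that]]
      by (intro sum.cong) auto
    finally show ?thesis .
  qed
  then have "(\<Sum>i\<in>I. Y i) = (\<Sum>i\<in>I. \<Sum>B\<in>Bs i. mscale (hs B X) B)"
    by (intro sum.cong) auto
  with X show ?thesis by (rule trans)
qed

lemma sum_orth_proj:
  assumes "finite I" and "orth_decomp I E"
    and "\<And>i. i \<in> I \<Longrightarrow> orthonormal_basis (Bs i) (E i)"
  shows "(\<Sum>i\<in>I. orth_proj (E i) X) = X"
proof -
  have "(\<Sum>i\<in>I. orth_proj (E i) X) = (\<Sum>i\<in>I. \<Sum>B\<in>Bs i. mscale (hs B X) B)"
    using orth_proj_eq_expansion[OF orth_decomp_msubspace[OF assms(2)] assms(3)] by simp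
  also have "\<dots> = X"
    using orth_decomp_expansion[OF assms] by (rule sym)
  finally show ?thesis .
qed

lemma sum_Aform:
  assumes "finite I" and "orth_decomp I E"
    and "\<And>i. i \<in> I \<Longrightarrow> orthonormal_basis (Bs i) (E i)"
  shows "(\<Sum>i\<in>I. Aform (E i) X Y) = hs X Y"
  by (simp add: Aform_def flip: hs_sum_right) (simp add: sum_orth_proj[OF assms])

definition matrix_unit :: "'n \<Rightarrow> 'n \<Rightarrow> complex^'n^'n" where
  "matrix_unit a b = (\<chi> p q. if p = a \<and> q = b then 1 else 0)"

lemma hs_matrix_unit_right: "hs B (matrix_unit a b) = cnj (B $ a $ b)"
proof -
  have "(\<Sum>j\<in>UNIV. cnj (B $ i $ j) * matrix_unit a b $ i $ j) = (if i = a then cnj (B $ a $ b) else 0)"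
    for i
    by (cases "i = a") (simp_all add: matrix_unit_def if_distrib[of "\<lambda>z. _ * z"] cong: if_cong)
  then show ?thesis by (simp add: hs_eq_sum_entries)
qed

text \<open>Completeness of the union of the bases, read off entrywise from the expansion of a
  matrix unit.\<close>

lemma orth_decomp_basis_entries:
  assumes "finite I" and "orth_decomp I E"
    and "\<And>i. i \<in> I \<Longrightarrow> orthonormal_basis (Bs i) (E i)"
  shows "(\<Sum>i\<in>I. \<Sum>B\<in>Bs i. cnj (B $ a $ b) * B $ c $ d) = (if c = a \<and> d = b then 1 else 0)"
proof -
  from orth_decomp_expansion[OF assms, of "matrix_unit a b"]
  have "matrix_unit a b $ c $ d = (\<Sum>i\<in>I. \<Sum>B\<in>Bs i. mscale (hs B (matrix_unit a b)) B) $ c $ d"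
    by (rule arg_cong[where f = "\<lambda>M. M $ c $ d"])
  then show ?thesis by (simp only: hs_matrix_unit_right) (simp add: matrix_unit_def)
qed

lemma sum_twirl:
  assumes "finite I" and "orth_decomp I E"
    and "\<And>i. i \<in> I \<Longrightarrow> orthonormal_basis (Bs i) (E i)"
  shows "(\<Sum>i\<in>I. twirl (Bs i) X) = mscale (trace X) (mat 1)"
proof -
  have entry: "(adj B ** X ** B) $ a $ d
      = (\<Sum>b\<in>UNIV. \<Sum>c\<in>UNIV. X $ b $ c * (cnj (B $ b $ a) * B $ c $ d))" for B a d
    by (simp add: matrix_mult_nth sum_distrib_right sum_distrib_left algebra_simps)
      (rule sum.swap)
  have "(\<Sum>i\<in>I. twirl (Bs i) X) $ a $ d = mscale (trace X) (mat 1) $ a $ d" for a d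
  proof -
    have "(\<Sum>i\<in>I. twirl (Bs i) X) $ a $ d
        = (\<Sum>i\<in>I. \<Sum>B\<in>Bs i. \<Sum>b\<in>UNIV. \<Sum>c\<in>UNIV. X $ b $ c * (cnj (B $ b $ a) * B $ c $ d))"
      by (simp add: twirl_def entry)
    also have "\<dots> = (\<Sum>b\<in>UNIV. \<Sum>c\<in>UNIV.
        X $ b $ c * (\<Sum>i\<in>I. \<Sum>B\<in>Bs i. cnj (B $ b $ a) * B $ c $ d))"
      by (simp add: sum_distrib_left sum.swap[of _ I] sum.swap[of _ "Bs _"])
    also have "\<dots> = (\<Sum>b\<in>UNIV. \<Sum>c\<in>UNIV. X $ b $ c * (if c = b \<and> d = a then 1 else 0))"
      by (simp add: orth_decomp_basis_entries[OF assms])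
    also have "\<dots> = mscale (trace X) (mat 1) $ a $ d"
      by (simp add: trace_def mat_def if_distrib cong: if_cong)
    finally show ?thesis .
  qed
  then show ?thesis by (simp add: vec_eq_iff)
qed

lemma sum_Bform:
  assumes "finite I" and "orth_decomp I E"
    and "\<And>i. i \<in> I \<Longrightarrow> orthonormal_basis (Bs i) (E i)"
  shows "(\<Sum>i\<in>I. Bform (Bs i) X Y) = trace Y * hs X (mat 1)"
  by (simp add: Bform_def sum_twirl[OF assms] hs_scale_right flip: hs_sum_right)

section \<open>The identity sector\<close>

lemma mspan_singleton: "mspan {A} = range (\<lambda>c. mscale c A)"
  unfolding mspan_def by auto

lemma mscale_add_left: "mscale a X + mscale b X = mscale (a + b) X"
  by (simp add: vec_eq_iff algebra_simps)

lemma msubspace_mspan_singleton: "msubspace (mspan {A})"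
  unfolding msubspace_def mspan_singleton
proof (intro conjI ballI allI)
  show "0 \<in> range (\<lambda>c. mscale c A)"
    by (rule range_eqI[of _ _ 0]) (simp add: vec_eq_iff)
  show "x + y \<in> range (\<lambda>c. mscale c A)"
    if "x \<in> range (\<lambda>c. mscale c A)" and "y \<in> range (\<lambda>c. mscale c A)" for x y
    using that by (auto simp: mscale_add_left)
  show "mscale c x \<in> range (\<lambda>c. mscale c A)" if "x \<in> range (\<lambda>c. mscale c A)" for c x
    using that by auto
qed

lemma orthonormal_basis_mspan_identity:
  assumes "orthonormal_basis Bs (mspan {mat 1 :: complex^'n^'n})"
  obtains c where "Bs = {mscale c (mat 1)}" and "cnj c * c = 1 / of_nat CARD('n)"
proof -
  have scalar: "\<exists>c. B = mscale c (mat 1) \<and> cnj c * c * of_nat CARD('n) = 1" if "B \<in> Bs" for B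
  proof -
    obtain c where B: "B = mscale c (mat 1)"
      using orthonormal_basisD(2)[OF assms] \<open>B \<in> Bs\<close> unfolding mspan_singleton by blast
    have "hs B B = 1" using orthonormal_basisD(4)[OF assms that that] by simp
    then have "cnj c * c * of_nat CARD('n) = 1"
      using B by (simp add: hs_scale_left hs_scale_right hs_mat_1_left trace_I mult_ac)
    with B show ?thesis by blast
  qed
  \<comment> \<open>Expanding \<open>mat 1\<close> in the basis gives \<open>mat 1 = card Bs * mat 1\<close>.\<close>
  have "mscale (hs B (mat 1)) B = mscale 1 (mat 1)" if "B \<in> Bs" for B
    using scalar[OF that]
    by (auto simp: hs_scale_left hs_mat_1_left trace_I mult.commute mult.left_commute)
  then have "(\<Sum>B\<in>Bs. mscale (hs B (mat 1)) B) = (\<Sum>B\<in>Bs. mscale 1 (mat 1))"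
    by (rule sum.cong[OF refl])
  also have "\<dots> = mscale (of_nat (card Bs)) (mat 1)"
    by (simp only: sum_mscale sum_constant mult_1_right)
  finally have "(\<Sum>B\<in>Bs. mscale (hs B (mat 1)) B) = mscale (of_nat (card Bs)) (mat 1)" .
  moreover have "mat 1 = (\<Sum>B\<in>Bs. mscale (hs B (mat 1)) B)"
    by (rule orthonormal_basis_expansion[OF assms])
      (auto simp: mspan_singleton intro: range_eqI[of _ _ 1])
  ultimately have "(mat 1 :: complex^'n^'n) $ i $ i = mscale (of_nat (card Bs)) (mat 1) $ i $ i"
    for i by simp
  then have "card Bs = 1" by (simp add: mat_def)
  then obtain B where "Bs = {B}" by (rule card_1_singletonE)
  with scalar that show ?thesis by (auto simp: field_simps)
qed

lemma Aform_mspan_identity: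
  assumes "orthonormal_basis Bs (mspan {mat 1 :: complex^'n^'n})"
  shows "Aform (mspan {mat 1 :: complex^'n^'n}) X Y = hs X (mat 1) * trace Y / of_nat CARD('n)"
proof -
  obtain c where Bs: "Bs = {mscale c (mat 1)}" and c: "cnj c * c = 1 / of_nat CARD('n)"
    by (rule orthonormal_basis_mspan_identity[OF assms])
  have "Aform (mspan {mat 1}) X Y = hs (mscale c (mat 1)) Y * hs X (mscale c (mat 1))"
    using Aform_eq_sum[OF msubspace_mspan_singleton assms] Bs by simp
  also have "\<dots> = cnj c * c * (hs X (mat 1) * trace Y)"
    by (simp add: hs_scale_left hs_scale_right hs_mat_1_left)
  finally show ?thesis using c by simp
qed

lemma Bform_mspan_identity:
  assumes "orthonormal_basis Bs (mspan {mat 1 :: complex^'n^'n})"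
  shows "Bform Bs X Y = hs X Y / of_nat CARD('n)"
proof -
  obtain c where Bs: "Bs = {mscale c (mat 1)}" and c: "cnj c * c = 1 / of_nat CARD('n)"
    by (rule orthonormal_basis_mspan_identity[OF assms])
  have "twirl Bs Y = mscale (cnj c * c) Y"
    by (simp add: Bs twirl_def adj_mscale matrix_mult_mscale_left matrix_mult_mscale_right
        mult.commute)
  then show ?thesis using c by (simp add: Bform_def hs_scale_right)
qed

section \<open>Orthogonal projectors\<close>

lemma idempotent_fixes_range:
  fixes P :: "'a::semiring_1^'n^'n"
  assumes "P ** P = P" and "v \<in> range (\<lambda>w. P *v w)"
  shows "P *v v = v"
  using assms by (auto simp: matrix_vector_mul_assoc)

lemma idempotent_absorb: "P ** P = P \<Longrightarrow> X ** P ** P = X ** P"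
  by (simp flip: matrix_mul_assoc)

lemma trace_idempotent_eq_dim:
  fixes P :: "'a::field^'n^'n"
  assumes idem: "P ** P = P" and range: "range (\<lambda>v. P *v v) = C"
  shows "trace P = of_nat (vec.dim C)"
proof -
  obtain B where "B \<subseteq> C" and indep: "vec.independent B" and "C \<subseteq> vec.span B"
    and card: "card B = vec.dim C" by (rule vec.basis_exists)
  have "finite B" using indep by (rule vec.finiteI_independent)
  define R where "R v = vec.representation B (P *v v)" for v
  have in_span: "P *v v \<in> vec.span B" for v using range \<open>C \<subseteq> vec.span B\<close> by auto
  have fixed: "P *v b = b" if "b \<in> B" for b
    using idempotent_fixes_range[OF idem] that \<open>B \<subseteq> C\<close> range by blast
  have R_basis: "R b b' = (if b' = b then 1 else 0)" if "b \<in> B" for b b'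
    unfolding R_def fixed[OF that] using vec.representation_basis[OF indep that] by simp
  have R_linear: "R (\<Sum>i\<in>UNIV. c i *s x i) b = (\<Sum>i\<in>UNIV. c i * R (x i) b)" for c x b
  proof -
    have "P *v (\<Sum>i\<in>UNIV. c i *s x i) = (\<Sum>i\<in>UNIV. c i *s (P *v x i))"
      by (simp add: vec.sum vec.scale)
    then show ?thesis unfolding R_def
      by (simp add: vec.representation_sum[OF indep] vec.representation_scale[OF indep in_span]
          vec.span_scale[OF in_span])
  qed
  have entry: "P $ i $ j = (\<Sum>b\<in>B. R (axis j 1) b * b $ i)" for i j
  proof -
    have "P $ i $ j = (P *v axis j 1) $ i"
      by (simp add: matrix_vector_mult_def axis_def if_distrib cong: if_cong)
    also have "\<dots> = (\<Sum>b\<in>B. R (axis j 1) b * b $ i)"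
      unfolding R_def
      by (subst vec.sum_representation_eq[OF indep in_span \<open>finite B\<close> order_refl, symmetric])
        (simp add: sum_component)
    finally show ?thesis .
  qed
  have "trace P = (\<Sum>b\<in>B. \<Sum>i\<in>UNIV. b $ i * R (axis i 1) b)"
    by (simp add: trace_def entry mult.commute) (rule sum.swap)
  also have "\<dots> = (\<Sum>b\<in>B. R b b)"
    by (simp add: R_linear[symmetric] basis_expansion)
  also have "\<dots> = of_nat (card B)"
    by (simp add: R_basis)
  finally show ?thesis using card by simp
qed

lemma orth_projector_dim:
  assumes "is_orth_projector P C"
  shows "trace P = of_nat (vec.dim C)" and "hs P (mat 1) = of_nat (vec.dim C)"
    and "hs P P = of_nat (vec.dim C)" and "complex_of_real (hs_norm2 P) = of_nat (vec.dim C)"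
proof -
  have "adj P = P" and idem: "P ** P = P" and range: "range (\<lambda>v. P *v v) = C"
    using assms unfolding is_orth_projector_def by auto
  then show "trace P = of_nat (vec.dim C)" and "hs P (mat 1) = of_nat (vec.dim C)"
    and "hs P P = of_nat (vec.dim C)"
    by (simp_all add: hs_def trace_idempotent_eq_dim[OF idem range])
  then show "complex_of_real (hs_norm2 P) = of_nat (vec.dim C)"
    by (simp add: hs_self_eq_norm2)
qed

lemma hs_projector_compress:
  fixes P B :: "complex^'n^'n"
  assumes "adj P = P" and "P ** P = P"
  shows "hs B P = hs (P ** B ** P) P"
proof -
  have "hs (P ** B ** P) P = trace (P ** (adj B ** P))"
    by (simp add: hs_def adj_matrix_mult assms matrix_mul_assoc idempotent_absorb)
  also have "\<dots> = trace (adj B ** P ** P)"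
    by (rule trace_mul_sym)
  also have "\<dots> = hs B P"
    by (simp add: hs_def assms flip: matrix_mul_assoc)
  finally show ?thesis by (rule sym)
qed

lemma hs_projector_twirl_term:
  fixes P B :: "complex^'n^'n"
  assumes "adj P = P" and "P ** P = P"
  shows "hs P (adj B ** P ** B) = complex_of_real (hs_norm2 (P ** B ** P))"
proof -
  have "hs (P ** B ** P) (P ** B ** P) = trace ((P ** adj B ** P ** B) ** P)"
    by (simp add: hs_def adj_matrix_mult assms matrix_mul_assoc idempotent_absorb)
  also have "\<dots> = trace (P ** (P ** adj B ** P ** B))"
    by (rule trace_mul_sym)
  also have "\<dots> = hs P (adj B ** P ** B)"
    by (simp add: hs_def assms matrix_mul_assoc)
  finally show ?thesis by (simp add: hs_self_eq_norm2)
qed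

lemma Aform_projector:
  assumes "msubspace S" and "orthonormal_basis Bs S" and "adj P = P" and "P ** P = P"
  shows "Aform S P P = complex_of_real (\<Sum>B\<in>Bs. (cmod (hs (P ** B ** P) P))\<^sup>2)"
  by (simp only: Aform_self_eq[OF assms(1,2)] hs_projector_compress[OF assms(3,4), symmetric])

lemma Bform_projector:
  assumes "adj P = P" and "P ** P = P"
  shows "Bform Bs P P = complex_of_real (\<Sum>B\<in>Bs. hs_norm2 (P ** B ** P))"
  by (simp add: Bform_def twirl_def hs_sum_right hs_projector_twirl_term[OF assms])

lemma Aform_le_Bform_projector:
  assumes "msubspace S" and "orthonormal_basis Bs S" and "adj P = P" and "P ** P = P"
  shows "Aform S P P \<le> complex_of_real (hs_norm2 P) * Bform Bs P P"
    and "Aform S P P = complex_of_real (hs_norm2 P) * Bform Bs P P \<longleftrightarrow> detects P S"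
proof -
  define a where "a B = (cmod (hs (P ** B ** P) P))\<^sup>2" for B
  define b where "b B = hs_norm2 P * hs_norm2 (P ** B ** P)" for B
  have le: "a B \<le> b B" for B
    unfolding a_def b_def by (rule hs_cauchy_schwarz)
  have A: "Aform S P P = complex_of_real (sum a Bs)"
    unfolding a_def by (rule Aform_projector[OF assms])
  have B: "complex_of_real (hs_norm2 P) * Bform Bs P P = complex_of_real (sum b Bs)"
    by (simp add: Bform_projector[OF assms(3,4)] b_def sum_distrib_left)
  show "Aform S P P \<le> complex_of_real (hs_norm2 P) * Bform Bs P P"
    unfolding A B less_eq_complex_def by (simp add: sum_mono le)
  have "Aform S P P = complex_of_real (hs_norm2 P) * Bform Bs P P \<longleftrightarrow> sum a Bs = sum b Bs"
    unfolding A B of_real_eq_iff by (rule refl)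
  also have "\<dots> \<longleftrightarrow> (\<forall>B\<in>Bs. a B = b B)"
    by (rule sum_mono_eq_iff[OF orthonormal_basisD(1)[OF assms(2)] le])
  also have "\<dots> \<longleftrightarrow> detects P S"
  proof (cases "P = 0")
    case True
    have "detects 0 S"
      unfolding detects_def by (auto intro!: exI[of _ 0] simp: vec_eq_iff)
    moreover have "a B = b B" for B
      using True by (simp add: a_def b_def hs_norm2_def)
    ultimately show ?thesis using True by simp
  next
    case False
    then show ?thesis
      unfolding detects_iff_orthonormal_basis[OF assms(2)] a_def b_def
      by (simp add: hs_cauchy_schwarz_eq_iff)
  qed
  finally show "Aform S P P = complex_of_real (hs_norm2 P) * Bform Bs P P \<longleftrightarrow> detects P S" .
qed

theorem mainTheorem4:
  fixes I :: "'i set"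
    and E :: "'i \<Rightarrow> (complex^'n^'n) set"
    and Bs :: "'i \<Rightarrow> (complex^'n^'n) set"
    and C :: "(complex^'n) set"
    and P :: "complex^'n^'n"
    and K :: nat
  assumes "finite I"
    and "orth_decomp I E"
    and "\<And>i. i \<in> I \<Longrightarrow> orthonormal_basis (Bs i) (E i)"
    and "vec.subspace C"
    and "K = vec.dim C"
    and "is_orth_projector P C"
  shows "(\<forall>i\<in>I. 0 \<le> Aform (E i) P P)
    \<and> (\<Sum>i\<in>I. Aform (E i) P P) = of_nat K
    \<and> (\<Sum>i\<in>I. Bform (Bs i) P P) = of_nat K ^ 2
    \<and> (\<forall>i0\<in>I. E i0 = mspan {mat 1} \<longrightarrow>
          Aform (E i0) P P = of_nat K ^ 2 / of_nat CARD('n)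
        \<and> Bform (Bs i0) P P = of_nat K / of_nat CARD('n))
    \<and> (\<forall>i\<in>I. Aform (E i) P P \<le> of_nat K * Bform (Bs i) P P
        \<and> (Aform (E i) P P = of_nat K * Bform (Bs i) P P \<longleftrightarrow> detects P (E i)))"
proof -
  note decomp = assms(1-3) and subspace = orth_decomp_msubspace[OF assms(2)]
  note dim = orth_projector_dim[OF assms(6), folded assms(5)]
  have self_adjoint: "adj P = P" and idem: "P ** P = P"
    using assms(6) unfolding is_orth_projector_def by auto
  have identity_sector: "\<forall>i0\<in>I. E i0 = mspan {mat 1} \<longrightarrow>
      Aform (E i0) P P = of_nat K ^ 2 / of_nat CARD('n)
      \<and> Bform (Bs i0) P P = of_nat K / of_nat CARD('n)"
  proof (intro ballI impI)
    fix i0 assume "i0 \<in> I" and sector: "E i0 = mspan {mat 1}"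
    have basis: "orthonormal_basis (Bs i0) (mspan {mat 1})"
      using assms(3)[OF \<open>i0 \<in> I\<close>] unfolding sector .
    show "Aform (E i0) P P = of_nat K ^ 2 / of_nat CARD('n)
      \<and> Bform (Bs i0) P P = of_nat K / of_nat CARD('n)"
      unfolding sector Aform_mspan_identity[OF basis] Bform_mspan_identity[OF basis]
      by (simp add: dim power2_eq_square)
  qed
  have projector_bound: "\<forall>i\<in>I. Aform (E i) P P \<le> of_nat K * Bform (Bs i) P P
      \<and> (Aform (E i) P P = of_nat K * Bform (Bs i) P P \<longleftrightarrow> detects P (E i))"
    using Aform_le_Bform_projector[OF subspace assms(3) self_adjoint idem] unfolding dim by blast
  have "\<forall>i\<in>I. 0 \<le> Aform (E i) P P"
    using Aform_self_nonneg[OF subspace assms(3)] by blast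
  moreover have "(\<Sum>i\<in>I. Aform (E i) P P) = of_nat K"
    and "(\<Sum>i\<in>I. Bform (Bs i) P P) = of_nat K ^ 2"
    by (simp_all add: sum_Aform[OF decomp] sum_Bform[OF decomp] dim power2_eq_square)
  ultimately show ?thesis
    using identity_sector projector_bound by (intro conjI)
qed

end
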